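(* For every $n\ge0$, $$\langle P_n^{(\alpha,\beta,v)},P_n^{(\alpha,\beta,v)}\rangle_W=\frac{n!\,v\,B(\alpha+n+2,\beta+n+2)}{(\alpha+\beta+n+3)_n}\begin{pmatrix}\dfrac{(\kappa_{v,\beta}+2)(\kappa_{-v,\beta}+2n+4)}{\kappa_{v,-\beta}(\kappa_{v,\beta}+2n+2)}&0\\0&-\dfrac{(\kappa_{-v,\beta}+2)(\kappa_{v,\beta}+2n+4)}{\kappa_{-v,-\beta}(\kappa_{-v,\beta}+2n+2)}\end{pmatrix},$$ where $B$ is the Beta function. Consequently, writing $\|P_n^{(\alpha,\beta,v)}\|$ for the positive definite square root of this diagonal matrix, the polynomials $\widetilde P_n=\|P_n^{(\alpha,\beta,v)}\|^{-1}P_n^{(\alpha,\beta,v)}$ are orthonormal with respect to $W$.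
   Context: Fix real numbers $\alpha,\beta,v$ with $\alpha>-1$, $\beta>-1$ and $|\alpha-\beta|<|v|<\alpha+\beta+2$. Write $\kappa_{\pm v,\pm\beta}=\alpha\pm v\pm\beta$. Define $$\widetilde W(t)=\begin{pmatrix}\frac{v(\kappa_{v,\beta}+2)}{\kappa_{v,-\beta}}t^2-(\kappa_{v,\beta}+2)t+(\alpha+1) & (\alpha+\beta+2)t-(\alpha+1)\\ (\alpha+\beta+2)t-(\alpha+1) & -\frac{v(\kappa_{-v,\beta}+2)}{\kappa_{-v,-\beta}}t^2-(\kappa_{-v,\beta}+2)t+(\alpha+1)\end{pmatrix}$$ and $W(t)=t^\alpha(1-t)^\beta\widetilde W(t)$ on $(0,1)$. $\langle P,Q\rangle_W=\int_0^1P(t)W(t)Q(t)^*dt$. $(P_n^{(\alpha,\beta,v)})_{n\ge0}$ is the sequence of monic $2\times2$ matrix polynomials orthogonal with respect to $W$. $(x)_n$ is the Pochhammer symbol. *)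

theory Defs
  imports "HOL-Analysis.Analysis"
begin

type_synonym mat2 = "real^2^2"

definition mk2 :: "real \<Rightarrow> real \<Rightarrow> real \<Rightarrow> real \<Rightarrow> mat2" where
  "mk2 a b c d = (\<chi> i j. if i = 1 then (if j = 1 then a else b) else (if j = 1 then c else d))"

text \<open>kappa with signs: kap a s v t b = a + s*v + t*b, s,t in {1,-1}.\<close>
definition Wtilde :: "real \<Rightarrow> real \<Rightarrow> real \<Rightarrow> real \<Rightarrow> mat2" where
  "Wtilde \<alpha> \<beta> v t =
     mk2 (v * (\<alpha> + v + \<beta> + 2) / (\<alpha> + v - \<beta>) * t^2 - (\<alpha> + v + \<beta> + 2) * t + (\<alpha> + 1))
         ((\<alpha> + \<beta> + 2) * t - (\<alpha> + 1))
         ((\<alpha> + \<beta> + 2) * t - (\<alpha> + 1))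
         (- (v * (\<alpha> - v + \<beta> + 2) / (\<alpha> - v - \<beta>)) * t^2 - (\<alpha> - v + \<beta> + 2) * t + (\<alpha> + 1))"

definition Wmat :: "real \<Rightarrow> real \<Rightarrow> real \<Rightarrow> real \<Rightarrow> mat2" where
  "Wmat \<alpha> \<beta> v t = (t powr \<alpha> * (1 - t) powr \<beta>) *\<^sub>R Wtilde \<alpha> \<beta> v t"

text \<open>Matrix inner product <P,Q>_W = int_0^1 P(t) W(t) Q(t)^* dt (real matrices, so * = transpose).\<close>
definition ipW :: "(real \<Rightarrow> mat2) \<Rightarrow> (real \<Rightarrow> mat2) \<Rightarrow> (real \<Rightarrow> mat2) \<Rightarrow> mat2" where
  "ipW W P Q = integral {0..1} (\<lambda>t. P t ** W t ** transpose (Q t))"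

definition monic_matpoly :: "nat \<Rightarrow> (real \<Rightarrow> mat2) \<Rightarrow> bool" where
  "monic_matpoly n P \<longleftrightarrow> (\<exists>C :: nat \<Rightarrow> mat2. C n = mat 1 \<and>
      (\<forall>t. P t = (\<Sum>k\<le>n. (t ^ k) *\<^sub>R C k)))"

definition monic_OMP :: "(real \<Rightarrow> mat2) \<Rightarrow> (nat \<Rightarrow> real \<Rightarrow> mat2) \<Rightarrow> bool" where
  "monic_OMP W P \<longleftrightarrow> (\<forall>n. monic_matpoly n (P n)) \<and>
      (\<forall>n m. n \<noteq> m \<longrightarrow> ipW W (P n) (P m) = 0)"

definition cfac :: "real \<Rightarrow> real \<Rightarrow> real \<Rightarrow> nat \<Rightarrow> real" where
  "cfac \<alpha> \<beta> v n = fact n * v * Beta (\<alpha> + n + 2) (\<beta> + n + 2) / pochhammer (\<alpha> + \<beta> + n + 3) n"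

definition dg1 :: "real \<Rightarrow> real \<Rightarrow> real \<Rightarrow> nat \<Rightarrow> real" where
  "dg1 \<alpha> \<beta> v n = cfac \<alpha> \<beta> v n * ((\<alpha> + v + \<beta> + 2) * (\<alpha> - v + \<beta> + 2 * n + 4)
                          / ((\<alpha> + v - \<beta>) * (\<alpha> + v + \<beta> + 2 * n + 2)))"

definition dg2 :: "real \<Rightarrow> real \<Rightarrow> real \<Rightarrow> nat \<Rightarrow> real" where
  "dg2 \<alpha> \<beta> v n = cfac \<alpha> \<beta> v n * (- ((\<alpha> - v + \<beta> + 2) * (\<alpha> + v + \<beta> + 2 * n + 4)
                          / ((\<alpha> - v - \<beta>) * (\<alpha> - v + \<beta> + 2 * n + 2))))"

end

theory Submission
  imports Defs "HOL-Computational_Algebra.Polynomial"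
begin

(* Write w_{a,b}(t) = t^a (1 - t)^b. The operator
   \<Phi>_{a,b} g = (a + 1 - (a + b + 2) t) g + t (1 - t) g'  satisfies  w_{a,b} \<Phi>_{a,b} g = (w_{a+1,b+1} g)',
   so integration by parts turns \<Phi> into minus the derivative, and iterating gives a Rodrigues formula.
   The weight admits matrix polynomials T, S with  T W_{a,b} = \<Phi>_{a,b} W_{a+1,b+1}  and
   S W_{a,b} = t (1 - t) W_{a+1,b+1}; hence  R_n W_{\<alpha>,\<beta>} = \<Phi>^n W_{\<alpha>+n,\<beta>+n}  for a matrix
   polynomial R_n of degree n with diagonal leading coefficient \<Lambda>_n. Pairing P_n with R_n, orthogonality
   to lower degrees gives <P_n,P_n> \<Lambda>_n, while the Rodrigues formula gives (-1)^n n! times the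
   integral of w_{\<alpha>+n,\<beta>+n} W_{\<alpha>+n,\<beta>+n}, a diagonal matrix of Beta values. Dividing gives the
   norm; |\<alpha> - \<beta>| < |v| < \<alpha> + \<beta> + 2 makes its entries positive, and orthonormality of the
   normalized sequence follows. *)

section \<open>Jacobi-weighted integrals of polynomials\<close>

lemma funpow_pderiv_degree_le:
  fixes p :: "'a::{idom, ring_char_0} poly"
  assumes "degree p \<le> n"
  shows "(pderiv ^^ n) p = [:fact n * coeff p n:]"
  using assms
proof (induction n arbitrary: p)
  case 0
  then show ?case by (auto elim!: degree_eq_zeroE)
next
  case (Suc n)
  then have "(pderiv ^^ n) (pderiv p) = [:fact n * coeff (pderiv p) n:]"
    by (intro Suc.IH) (simp add: degree_pderiv)
  then show ?case
    by (simp add: funpow_Suc_right coeff_pderiv del: funpow.simps)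
qed

lemma coeff_mult_degree_le:
  fixes p q :: "'a::idom poly"
  assumes "degree p \<le> m" "degree q \<le> d"
  shows "coeff (p * q) (m + d) = coeff p m * coeff q d"
proof (cases "degree p = m \<and> degree q = d")
  case True
  then show ?thesis
    using coeff_mult_degree_sum[of p q] by simp
next
  case False
  then have "coeff p m = 0 \<or> coeff q d = 0"
    using assms by (metis coeff_eq_0 le_neq_implies_less)
  moreover have "degree (p * q) < m + d \<or> p * q = 0"
    using False assms degree_mult_le[of p q] by (cases "p = 0 \<or> q = 0") auto
  ultimately show ?thesis
    by (metis coeff_eq_0 coeff_0 mult_zero_left mult_zero_right)
qed

lemma coeff_pderiv_mult_degree_le:
  fixes p q :: "'a::{idom, ring_char_0} poly"
  assumes "degree p \<le> m" "degree q \<le> 2"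
  shows "degree (pderiv p * q) \<le> m + 1"
    and "coeff (pderiv p * q) (m + 1) = of_nat m * coeff p m * coeff q 2"
proof -
  have d: "degree (pderiv p) \<le> m - 1"
    using assms(1) by (simp add: degree_pderiv)
  have "degree (pderiv p * q) \<le> (m - 1) + 2"
    using add_mono[OF d assms(2)] degree_mult_le order_trans by blast
  moreover have "coeff (pderiv p * q) ((m - 1) + 2) = coeff (pderiv p) (m - 1) * coeff q 2"
    using d assms(2) by (rule coeff_mult_degree_le)
  moreover have "m = 0 \<Longrightarrow> pderiv p = 0"
    using assms by (simp add: pderiv_eq_0_iff)
  ultimately show "degree (pderiv p * q) \<le> m + 1"
    and "coeff (pderiv p * q) (m + 1) = of_nat m * coeff p m * coeff q 2"
    by (cases m; simp add: coeff_pderiv mult_ac)+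
qed

definition jacobi_weight :: "real \<Rightarrow> real \<Rightarrow> real \<Rightarrow> real" where
  "jacobi_weight a b t = t powr a * (1 - t) powr b"

definition jacobi_integral :: "real \<Rightarrow> real \<Rightarrow> real poly \<Rightarrow> real" where
  "jacobi_integral a b f = integral {0..1} (\<lambda>t. jacobi_weight a b t * poly f t)"

lemma jacobi_weight_monom_has_integral:
  assumes "a > -1" "b > -1"
  shows "((\<lambda>t. jacobi_weight a b t * t ^ k) has_integral Beta (a + real k + 1) (b + 1)) {0..1}"
proof -
  have "((\<lambda>t. t powr (a + real k + 1 - 1) * (1 - t) powr (b + 1 - 1))
          has_integral Beta (a + real k + 1) (b + 1)) {0..1}"
    by (rule has_integral_Beta_real) (use assms in auto)
  moreover have "t powr (a + real k + 1 - 1) * (1 - t) powr (b + 1 - 1) = jacobi_weight a b t * t ^ k"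
    if "t \<in> {0..1}" for t
    using that by (cases "t = 0") (auto simp: jacobi_weight_def powr_add powr_realpow)
  ultimately show ?thesis
    by (rule has_integral_eq[rotated])
qed

lemma jacobi_weight_poly_has_integral:
  assumes "a > -1" "b > -1"
  shows "((\<lambda>t. jacobi_weight a b t * poly f t) has_integral jacobi_integral a b f) {0..1}"
proof -
  have "((\<lambda>t. \<Sum>i\<le>degree f. coeff f i * (jacobi_weight a b t * t ^ i))
          has_integral (\<Sum>i\<le>degree f. coeff f i * Beta (a + real i + 1) (b + 1))) {0..1}"
    by (intro has_integral_sum has_integral_mult_right jacobi_weight_monom_has_integral assms) auto
  moreover have "(\<Sum>i\<le>degree f. coeff f i * (jacobi_weight a b t * t ^ i)) = jacobi_weight a b t * poly f t" for t
    by (simp add: poly_altdef sum_distrib_left mult_ac)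
  ultimately show ?thesis
    unfolding jacobi_integral_def by (simp add: integrable_integral has_integral_integrable)
qed

lemma jacobi_weight_poly_integrable:
  "a > -1 \<Longrightarrow> b > -1 \<Longrightarrow> (\<lambda>t. jacobi_weight a b t * poly f t) integrable_on {0..1}"
  using jacobi_weight_poly_has_integral by blast

lemma jacobi_integral_add:
  assumes "a > -1" "b > -1"
  shows "jacobi_integral a b (f + g) = jacobi_integral a b f + jacobi_integral a b g"
  unfolding jacobi_integral_def poly_add distrib_left
  by (intro integral_add jacobi_weight_poly_integrable assms)

lemma jacobi_integral_smult: "jacobi_integral a b (smult c f) = c * jacobi_integral a b f"
  unfolding jacobi_integral_def by (subst integral_mult_right[symmetric]) (simp add: mult_ac)

lemma jacobi_integral_sum:
  "a > -1 \<Longrightarrow> b > -1 \<Longrightarrow> jacobi_integral a b (\<Sum>i\<in>S. f i) = (\<Sum>i\<in>S. jacobi_integral a b (f i))"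
  by (induction S rule: infinite_finite_induct)
     (simp_all add: jacobi_integral_add jacobi_integral_def[of a b 0])

lemma jacobi_integral_quadratic:
  assumes "a > -1" "b > -1"
  shows "jacobi_integral a b [:c0, c1, c2:]
           = c0 * Beta (a + 1) (b + 1) + c1 * Beta (a + 2) (b + 1) + c2 * Beta (a + 3) (b + 1)"
proof -
  have "((\<lambda>t. c0 * (jacobi_weight a b t * t ^ 0) + c1 * (jacobi_weight a b t * t ^ 1)
             + c2 * (jacobi_weight a b t * t ^ 2)) has_integral
        c0 * Beta (a + real 0 + 1) (b + 1) + c1 * Beta (a + real 1 + 1) (b + 1)
          + c2 * Beta (a + real 2 + 1) (b + 1)) {0..1}"
    by (intro has_integral_add has_integral_mult_right jacobi_weight_monom_has_integral assms)
  then have "((\<lambda>t. jacobi_weight a b t * poly [:c0, c1, c2:] t) has_integral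
        c0 * Beta (a + 1) (b + 1) + c1 * Beta (a + 2) (b + 1) + c2 * Beta (a + 3) (b + 1)) {0..1}"
    by (simp add: algebra_simps power2_eq_square add_ac)
  then show ?thesis
    unfolding jacobi_integral_def by (rule integral_unique)
qed

definition jacobi_raise :: "real \<Rightarrow> real \<Rightarrow> real poly \<Rightarrow> real poly" where
  "jacobi_raise a b g = [:a + 1, -(a + b + 2):] * g + [:0, 1, -1:] * pderiv g"

lemma jacobi_weight_raise_has_derivative:
  assumes t: "0 < t" "t < 1"
  shows "((\<lambda>t. jacobi_weight (a + 1) (b + 1) t * poly (g * h) t) has_real_derivative
           jacobi_weight a b t * poly (jacobi_raise a b g * h) t
           + jacobi_weight (a + 1) (b + 1) t * poly (g * pderiv h) t) (at t)"
proof -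
  have d1: "((\<lambda>t. t powr (a + 1)) has_real_derivative (a + 1) * t powr a) (at t)"
    using has_real_derivative_powr[OF t(1), of "a + 1"] by simp
  have d2: "((\<lambda>t. (1 - t) powr (b + 1)) has_real_derivative - ((b + 1) * (1 - t) powr b)) (at t)"
    using t by (auto intro!: derivative_eq_intros)
  define D where "D = (a + 1) * t powr a * (1 - t) powr (b + 1) * poly (g * h) t
        - t powr (a + 1) * ((b + 1) * (1 - t) powr b) * poly (g * h) t
        + t powr (a + 1) * (1 - t) powr (b + 1) * poly (pderiv (g * h)) t"
  have "((\<lambda>t. jacobi_weight (a + 1) (b + 1) t * poly (g * h) t) has_real_derivative D) (at t)"
    unfolding jacobi_weight_def D_def
    using DERIV_mult[OF DERIV_mult[OF d1 d2] poly_DERIV[of "g * h"]] by (simp add: algebra_simps)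
  moreover have "D = jacobi_weight a b t * poly (jacobi_raise a b g * h) t
                     + jacobi_weight (a + 1) (b + 1) t * poly (g * pderiv h) t"
  proof -
    have e: "t powr (a + 1) = t * t powr a" "(1 - t) powr (b + 1) = (1 - t) * (1 - t) powr b"
      using t by (simp_all add: powr_add)
    show ?thesis
      unfolding D_def jacobi_weight_def jacobi_raise_def e by (simp add: pderiv_mult algebra_simps)
  qed
  ultimately show ?thesis
    by simp
qed

lemma jacobi_integral_raise_mult:
  assumes a: "a > -1" and b: "b > -1"
  shows "jacobi_integral a b (jacobi_raise a b g * h) = - jacobi_integral (a + 1) (b + 1) (g * pderiv h)"
proof -
  define F where "F t = jacobi_weight (a + 1) (b + 1) t * poly (g * h) t" for t
  define f1 where "f1 t = jacobi_weight a b t * poly (jacobi_raise a b g * h) t" for t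
  define f2 where "f2 t = jacobi_weight (a + 1) (b + 1) t * poly (g * pderiv h) t" for t
  have "continuous_on {0..1} F"
    unfolding F_def jacobi_weight_def using a b
    by (intro continuous_intros continuous_on_powr') auto
  moreover have "(F has_vector_derivative f1 t + f2 t) (at t)" if "t \<in> {0<..<1}" for t
    using jacobi_weight_raise_has_derivative[of t a b g h] that
    unfolding F_def f1_def f2_def has_real_derivative_iff_has_vector_derivative by simp
  ultimately have "((\<lambda>t. f1 t + f2 t) has_integral F 1 - F 0) {0..1}"
    by (intro fundamental_theorem_of_calculus_interior) auto
  moreover have "F 1 - F 0 = 0"
    unfolding F_def jacobi_weight_def using a b by simp
  moreover have "f2 integrable_on {0..1}"
    unfolding f2_def by (rule jacobi_weight_poly_integrable) (use a b in auto)
  ultimately have "((\<lambda>t. (f1 t + f2 t) - f2 t) has_integral 0 - integral {0..1} f2) {0..1}"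
    by (intro has_integral_diff integrable_integral) auto
  then show ?thesis
    unfolding jacobi_integral_def f1_def f2_def by (simp add: integral_unique)
qed

fun jacobi_raise_pow :: "real \<Rightarrow> real \<Rightarrow> nat \<Rightarrow> real poly \<Rightarrow> real poly" where
  "jacobi_raise_pow a b 0 g = g"
| "jacobi_raise_pow a b (Suc m) g = jacobi_raise a b (jacobi_raise_pow (a + 1) (b + 1) m g)"

lemma jacobi_integral_raise_pow_mult:
  assumes "a > -1" "b > -1"
  shows "jacobi_integral a b (jacobi_raise_pow a b m g * h)
           = (-1) ^ m * jacobi_integral (a + real m) (b + real m) (g * (pderiv ^^ m) h)"
  using assms
proof (induction m arbitrary: a b h)
  case 0
  then show ?case by simp
next
  case (Suc m)
  have "jacobi_integral a b (jacobi_raise_pow a b (Suc m) g * h)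
          = - jacobi_integral (a + 1) (b + 1) (jacobi_raise_pow (a + 1) (b + 1) m g * pderiv h)"
    using Suc.prems by (simp add: jacobi_integral_raise_mult)
  also have "\<dots> = - ((-1) ^ m * jacobi_integral (a + 1 + real m) (b + 1 + real m)
                                     (g * (pderiv ^^ m) (pderiv h)))"
    using Suc.prems by (subst Suc.IH) auto
  also have "(pderiv ^^ m) (pderiv h) = (pderiv ^^ Suc m) h"
    by (simp add: funpow_Suc_right del: funpow.simps)
  finally show ?case
    by (simp add: algebra_simps)
qed

lemma jacobi_raise_add: "jacobi_raise a b (f + g) = jacobi_raise a b f + jacobi_raise a b g"
  unfolding jacobi_raise_def pderiv_add distrib_left by (simp only: add_ac)

lemma jacobi_raise_sum: "jacobi_raise a b (\<Sum>i\<in>S. f i) = (\<Sum>i\<in>S. jacobi_raise a b (f i))"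
  by (induction S rule: infinite_finite_induct)
     (simp_all add: jacobi_raise_add jacobi_raise_def[of a b 0])

lemma jacobi_raise_mult:
  "jacobi_raise a b (r * g) = r * jacobi_raise a b g + pderiv r * ([:0, 1, -1:] * g)"
  unfolding jacobi_raise_def pderiv_mult distrib_left by (simp only: add_ac mult_ac)

section \<open>Matrix polynomials\<close>

lemma transpose_add: "transpose (A + B) = transpose A + transpose (B :: 'a::semiring_1^'n^'m)"
  by (simp add: vec_eq_iff transpose_def)

lemma matrix_add_rdistrib: "((A :: 'a::semiring_1^'n^'m) + B) ** C = A ** C + B ** C"
  by (simp add: vec_eq_iff matrix_matrix_mult_def sum.distrib distrib_right)

lemma matrix_mult_scaleR_left: "(c *\<^sub>R A :: real^'n^'m) ** B = c *\<^sub>R (A ** B)"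
  by (simp add: vec_eq_iff matrix_matrix_mult_def sum_distrib_left mult_ac)

lemma matrix_mult_scaleR_right: "(A :: real^'n^'m) ** (c *\<^sub>R B) = c *\<^sub>R (A ** B)"
  by (simp add: vec_eq_iff matrix_matrix_mult_def sum_distrib_left mult_ac)

lemma matrix_eq_sum_entries:
  "(A :: real^'n^'m) = (\<Sum>i\<in>UNIV. \<Sum>j\<in>UNIV. A $ i $ j *\<^sub>R (\<chi> k l. of_bool (k = i) * of_bool (l = j)))"
  by (simp add: vec_eq_iff sum_component mult.assoc[symmetric] mult.commute[of "A $ _ $ _"]
      sum_distrib_left[symmetric])

lemma matrix_inv_unique:
  fixes A B :: "'a::semiring_1^'n^'n"
  assumes AB: "A ** B = mat 1" and BA: "B ** A = mat 1"
  shows "matrix_inv A = B"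
proof -
  have inv: "A ** matrix_inv A = mat 1 \<and> matrix_inv A ** A = mat 1"
    unfolding matrix_inv_def by (rule someI[where x = B]) (use AB BA in simp)
  have "matrix_inv A = matrix_inv A ** (A ** B)"
    using AB by simp
  also have "\<dots> = B"
    using inv by (simp add: matrix_mul_assoc)
  finally show ?thesis .
qed

definition pmat_eval :: "real poly^'n^'m \<Rightarrow> real \<Rightarrow> real^'n^'m" where
  "pmat_eval M t = (\<chi> i j. poly (M $ i $ j) t)"

definition pmat_const :: "real^'n^'m \<Rightarrow> real poly^'n^'m" where
  "pmat_const C = (\<chi> i j. [:C $ i $ j:])"

definition pmat_map :: "(real poly \<Rightarrow> real poly) \<Rightarrow> real poly^'n^'m \<Rightarrow> real poly^'n^'m" where
  "pmat_map f M = (\<chi> i j. f (M $ i $ j))"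

definition pmat_integral :: "real \<Rightarrow> real \<Rightarrow> real poly^'n^'m \<Rightarrow> real^'n^'m" where
  "pmat_integral a b M = (\<chi> i j. jacobi_integral a b (M $ i $ j))"

definition pmat_degree_le :: "real poly^'n^'m \<Rightarrow> nat \<Rightarrow> bool" where
  "pmat_degree_le M n \<longleftrightarrow> (\<forall>i j. degree (M $ i $ j) \<le> n)"

definition pmat_degree_less :: "real poly^'n^'m \<Rightarrow> nat \<Rightarrow> bool" where
  "pmat_degree_less M n \<longleftrightarrow> (\<forall>i j k. n \<le> k \<longrightarrow> coeff (M $ i $ j) k = 0)"

definition pmat_coeff :: "real poly^'n^'m \<Rightarrow> nat \<Rightarrow> real^'n^'m" where
  "pmat_coeff M n = (\<chi> i j. coeff (M $ i $ j) n)"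

lemma pmat_coeff_nth [simp]: "pmat_coeff M n $ i $ j = coeff (M $ i $ j) n"
  by (simp add: pmat_coeff_def)

lemma pmat_map_nth [simp]: "pmat_map f M $ i $ j = f (M $ i $ j)"
  by (simp add: pmat_map_def)

lemma pmat_map_map [simp]: "pmat_map f (pmat_map g M) = pmat_map (f \<circ> g) M"
  by (simp add: vec_eq_iff)

lemma pmat_eval_mult: "pmat_eval (A ** B) t = pmat_eval A t ** pmat_eval B t"
  by (simp add: vec_eq_iff pmat_eval_def matrix_matrix_mult_def poly_sum)

lemma pmat_eval_transpose: "pmat_eval (transpose A) t = transpose (pmat_eval A t)"
  by (simp add: vec_eq_iff pmat_eval_def transpose_def)

lemma pmat_eval_const [simp]: "pmat_eval (pmat_const C) t = C"
  by (simp add: vec_eq_iff pmat_eval_def pmat_const_def)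

lemma transpose_pmat_const: "transpose (pmat_const C) = pmat_const (transpose C)"
  by (simp add: vec_eq_iff pmat_const_def transpose_def)

lemma pmat_eval_has_integral:
  fixes M :: "real poly^'n^'m"
  assumes "a > -1" "b > -1"
  shows "((\<lambda>t. jacobi_weight a b t *\<^sub>R pmat_eval M t) has_integral pmat_integral a b M) {0..1}"
proof -
  define E :: "'m \<Rightarrow> 'n \<Rightarrow> real^'n^'m" where
    "E i j = (\<chi> k l. of_bool (k = i) * of_bool (l = j))" for i j
  have "((\<lambda>t. \<Sum>i\<in>UNIV. \<Sum>j\<in>UNIV. (jacobi_weight a b t * poly (M $ i $ j) t) *\<^sub>R E i j)
          has_integral (\<Sum>i\<in>UNIV. \<Sum>j\<in>UNIV. jacobi_integral a b (M $ i $ j) *\<^sub>R E i j)) {0..1}"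
    by (intro has_integral_sum has_integral_scaleR_left jacobi_weight_poly_has_integral assms) auto
  moreover have "jacobi_weight a b t *\<^sub>R pmat_eval M t
                   = (\<Sum>i\<in>UNIV. \<Sum>j\<in>UNIV. (jacobi_weight a b t * poly (M $ i $ j) t) *\<^sub>R E i j)" for t
    by (subst matrix_eq_sum_entries) (simp add: E_def pmat_eval_def)
  moreover have "pmat_integral a b M = (\<Sum>i\<in>UNIV. \<Sum>j\<in>UNIV. jacobi_integral a b (M $ i $ j) *\<^sub>R E i j)"
    by (subst matrix_eq_sum_entries) (simp add: E_def pmat_integral_def)
  ultimately show ?thesis
    by simp
qed

lemma pmat_integral_add:
  "a > -1 \<Longrightarrow> b > -1 \<Longrightarrow> pmat_integral a b (A + B) = pmat_integral a b A + pmat_integral a b B"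
  by (simp add: vec_eq_iff pmat_integral_def jacobi_integral_add)

lemma pmat_integral_const_mult:
  "a > -1 \<Longrightarrow> b > -1 \<Longrightarrow> pmat_integral a b (pmat_const C ** M) = C ** pmat_integral a b M"
  by (simp add: vec_eq_iff pmat_integral_def pmat_const_def matrix_matrix_mult_def
      jacobi_integral_sum jacobi_integral_smult)

lemma pmat_integral_mult_const:
  "a > -1 \<Longrightarrow> b > -1 \<Longrightarrow> pmat_integral a b (M ** pmat_const C) = pmat_integral a b M ** C"
  by (simp add: vec_eq_iff pmat_integral_def pmat_const_def matrix_matrix_mult_def
      jacobi_integral_sum jacobi_integral_smult mult.commute[of _ "[:_:]"] mult.commute[of _ "C $ _ $ _"])

lemma pmat_raise_mult:
  "pmat_map (jacobi_raise a b) (R ** X)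
     = R ** pmat_map (jacobi_raise a b) X + pmat_map pderiv R ** pmat_map ((*) [:0, 1, -1:]) X"
proof -
  have "jacobi_raise a b (\<Sum>k\<in>UNIV. R $ i $ k * X $ k $ j)
          = (\<Sum>k\<in>UNIV. R $ i $ k * jacobi_raise a b (X $ k $ j))
            + (\<Sum>k\<in>UNIV. pderiv (R $ i $ k) * ([:0, 1, -1:] * X $ k $ j))" for i j
    unfolding jacobi_raise_sum jacobi_raise_mult by (rule sum.distrib)
  then show ?thesis
    by (simp add: vec_eq_iff matrix_matrix_mult_def del: mult_pCons_left)
qed

lemma pmat_integral_raise_pow:
  assumes "a > -1" "b > -1"
  shows "pmat_integral a b (X ** transpose (pmat_map (jacobi_raise_pow a b n) Y))
           = (-1) ^ n *\<^sub>R pmat_integral (a + real n) (b + real n) (pmat_map (pderiv ^^ n) X ** transpose Y)"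
proof -
  have a': "a + real n > -1" and b': "b + real n > -1"
    using assms by auto
  have "jacobi_integral a b (\<Sum>k\<in>UNIV. X $ i $ k * jacobi_raise_pow a b n (Y $ j $ k))
          = (-1) ^ n * jacobi_integral (a + real n) (b + real n)
                          (\<Sum>k\<in>UNIV. (pderiv ^^ n) (X $ i $ k) * Y $ j $ k)" for i j
    by (simp add: jacobi_integral_sum[OF assms] jacobi_integral_sum[OF a' b'] sum_distrib_left
        mult.commute[of "X $ i $ _"] mult.commute[of "(pderiv ^^ n) (X $ i $ _)"]
        jacobi_integral_raise_pow_mult[OF assms])
  then show ?thesis
    by (simp add: vec_eq_iff pmat_integral_def matrix_matrix_mult_def transpose_def)
qed

lemma pmat_degree_le_const_mult: "pmat_degree_le M n \<Longrightarrow> pmat_degree_le (pmat_const C ** M) n"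
  unfolding pmat_degree_le_def matrix_matrix_mult_def pmat_const_def
  by (auto intro!: degree_sum_le order.trans[OF degree_mult_le])

lemma pmat_coeff_const_mult: "pmat_coeff (pmat_const C ** M) n = C ** pmat_coeff M n"
  by (simp add: vec_eq_iff matrix_matrix_mult_def pmat_const_def coeff_sum)

lemma pmat_funpow_pderiv_degree_le:
  "pmat_degree_le M n \<Longrightarrow> pmat_map (pderiv ^^ n) M = pmat_const (fact n *\<^sub>R pmat_coeff M n)"
  by (simp add: vec_eq_iff pmat_degree_le_def pmat_const_def funpow_pderiv_degree_le)

lemma pmat_degree_less_diff:
  assumes "pmat_degree_le A n" "pmat_degree_le B n" "pmat_coeff A n = pmat_coeff B n"
  shows "pmat_degree_less (A - B) n"
  unfolding pmat_degree_less_def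
proof (intro allI impI)
  fix i j k
  assume "n \<le> k"
  then consider "k = n" | "degree (A $ i $ j) < k" "degree (B $ i $ j) < k"
    using assms(1,2) unfolding pmat_degree_le_def by (metis le_less_trans le_neq_implies_less)
  then show "coeff ((A - B) $ i $ j) k = 0"
  proof cases
    case 1
    then show ?thesis using assms(3) by (simp add: vec_eq_iff)
  qed (simp add: coeff_eq_0)
qed

lemma pmat_degree_less_Suc:
  assumes "pmat_degree_less X (Suc m)" "pmat_degree_le Q m" "pmat_coeff Q m = mat 1"
  shows "pmat_degree_less (X - pmat_const (pmat_coeff X m) ** Q) m"
proof (rule pmat_degree_less_diff)
  show "pmat_degree_le X m"
    using assms(1) unfolding pmat_degree_less_def pmat_degree_le_def by (auto intro!: degree_le)
qed (use assms(2,3) in \<open>simp_all add: pmat_degree_le_const_mult pmat_coeff_const_mult\<close>)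

lemma pmat_degree_less_0: "pmat_degree_less X 0 \<Longrightarrow> X = 0"
  by (simp add: pmat_degree_less_def vec_eq_iff poly_eq_iff)

lemma pmat_integral_orth_degree_less:
  fixes A :: "real poly^'n^'m" and Q :: "nat \<Rightarrow> real poly^'n^'n" and X :: "real poly^'n^'l"
  assumes a: "a > -1" and b: "b > -1"
    and Q: "\<And>k. pmat_degree_le (Q k) k" "\<And>k. pmat_coeff (Q k) k = mat 1"
    and orth: "\<And>k. k < n \<Longrightarrow> pmat_integral a b (A ** transpose (Q k)) = 0"
    and X: "pmat_degree_less X n"
  shows "pmat_integral a b (A ** transpose X) = 0"
  using orth X
proof (induction n arbitrary: X)
  case 0
  then have "X = 0"
    by (intro pmat_degree_less_0) simp
  then have "A ** transpose X = 0"
    by (simp add: vec_eq_iff transpose_def matrix_matrix_mult_def)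
  then show ?case
    by (simp add: vec_eq_iff pmat_integral_def jacobi_integral_def)
next
  case (Suc m)
  define C where "C = pmat_coeff X m"
  define Y where "Y = X - pmat_const C ** Q m"
  have "pmat_degree_less Y m"
    unfolding Y_def C_def using Suc.prems(2) Q by (rule pmat_degree_less_Suc)
  then have "pmat_integral a b (A ** transpose Y) = 0"
    using Suc.prems(1) by (intro Suc.IH) auto
  moreover have "X = Y + pmat_const C ** Q m"
    by (simp add: Y_def)
  then have "pmat_integral a b (A ** transpose X)
               = pmat_integral a b (A ** transpose Y) + pmat_integral a b (A ** transpose (Q m)) ** transpose C"
    by (simp add: transpose_add matrix_add_ldistrib pmat_integral_add[OF a b] matrix_transpose_mul
        transpose_pmat_const matrix_mul_assoc pmat_integral_mult_const[OF a b])
  ultimately show ?case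
    using Suc.prems(1)[of m] by (simp add: matrix_matrix_mult_def vec_eq_iff)
qed

lemma pmat_integral_degree_le_leading:
  fixes A :: "real poly^'n^'m" and P R :: "real poly^'n^'n"
  assumes a: "a > -1" and b: "b > -1"
    and orth: "\<And>X :: real poly^'n^'n. pmat_degree_less X n \<Longrightarrow> pmat_integral a b (A ** transpose X) = 0"
    and P: "pmat_degree_le P n" "pmat_coeff P n = mat 1"
    and R: "pmat_degree_le R n"
  shows "pmat_integral a b (A ** transpose R)
           = pmat_integral a b (A ** transpose P) ** transpose (pmat_coeff R n)"
proof -
  define C where "C = pmat_coeff R n"
  define Y where "Y = R - pmat_const C ** P"
  have "pmat_degree_less Y n"
    unfolding Y_def using R pmat_degree_le_const_mult[OF P(1)]
    by (rule pmat_degree_less_diff) (simp add: pmat_coeff_const_mult P(2) C_def)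
  moreover have "R = Y + pmat_const C ** P"
    by (simp add: Y_def)
  then have "pmat_integral a b (A ** transpose R)
               = pmat_integral a b (A ** transpose Y) + pmat_integral a b (A ** transpose P) ** transpose C"
    by (simp add: transpose_add matrix_add_ldistrib pmat_integral_add[OF a b] matrix_transpose_mul
        transpose_pmat_const matrix_mul_assoc pmat_integral_mult_const[OF a b])
  ultimately show ?thesis
    using orth by (simp add: C_def)
qed

lemma pmat_integral_monic_raise_pow:
  fixes P :: "real poly^'n^'n" and Y :: "real poly^'n^'m"
  assumes a: "a > -1" and b: "b > -1" and P: "pmat_degree_le P n" "pmat_coeff P n = mat 1"
  shows "pmat_integral a b (P ** transpose (pmat_map (jacobi_raise_pow a b n) Y))
           = ((-1) ^ n * fact n) *\<^sub>R pmat_integral (a + real n) (b + real n) (transpose Y)"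
proof -
  have a': "a + real n > -1" and b': "b + real n > -1"
    using a b by auto
  have "pmat_map (pderiv ^^ n) P = pmat_const (fact n *\<^sub>R mat 1)"
    using pmat_funpow_pderiv_degree_le[OF P(1)] by (simp add: P(2))
  then show ?thesis
    by (simp add: pmat_integral_raise_pow[OF a b] pmat_integral_const_mult[OF a' b']
        matrix_mult_scaleR_left)
qed

lemma pmat_rodrigues_step:
  fixes R :: "real poly^'n^'m" and T S :: "real poly^'k^'n"
  assumes R: "pmat_degree_le R m" and T: "pmat_degree_le T 1" and S: "pmat_degree_le S 2"
  shows "pmat_degree_le (R ** T + pmat_map pderiv R ** S) (m + 1)"
    and "pmat_coeff (R ** T + pmat_map pderiv R ** S) (m + 1)
           = pmat_coeff R m ** (pmat_coeff T 1 + real m *\<^sub>R pmat_coeff S 2)"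
proof -
  have dR: "degree (R $ i $ l) \<le> m" and dT: "degree (T $ l $ j) \<le> 1" and dS: "degree (S $ l $ j) \<le> 2"
    for i l j
    using R T S by (simp_all add: pmat_degree_le_def)
  have entry: "(R ** T + pmat_map pderiv R ** S) $ i $ j
                 = (\<Sum>l\<in>UNIV. R $ i $ l * T $ l $ j + pderiv (R $ i $ l) * S $ l $ j)" for i j
    by (simp add: matrix_matrix_mult_def sum.distrib)
  have "degree (R $ i $ l * T $ l $ j) \<le> m + 1" for i l j
    using add_mono[OF dR dT] degree_mult_le order_trans by blast
  moreover have "degree (pderiv (R $ i $ l) * S $ l $ j) \<le> m + 1" for i l j
    using dR dS by (rule coeff_pderiv_mult_degree_le(1))
  ultimately show "pmat_degree_le (R ** T + pmat_map pderiv R ** S) (m + 1)"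
    unfolding pmat_degree_le_def entry by (auto intro!: degree_sum_le degree_add_le)
  show "pmat_coeff (R ** T + pmat_map pderiv R ** S) (m + 1)
          = pmat_coeff R m ** (pmat_coeff T 1 + real m *\<^sub>R pmat_coeff S 2)"
  proof -
    have "coeff (R $ i $ l * T $ l $ j) (Suc m) = coeff (R $ i $ l) m * coeff (T $ l $ j) 1"
      and "coeff (pderiv (R $ i $ l) * S $ l $ j) (Suc m) = real m * coeff (R $ i $ l) m * coeff (S $ l $ j) 2"
      for i l j
      using coeff_mult_degree_le[OF dR dT] coeff_pderiv_mult_degree_le(2)[OF dR dS] by simp_all
    then show ?thesis
      by (simp add: vec_eq_iff entry coeff_sum matrix_matrix_mult_def distrib_left sum.distrib mult_ac)
  qed
qed

lemma monic_matpoly_pmat_eval: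
  assumes "monic_matpoly n F"
  shows "\<exists>Q. F = pmat_eval Q \<and> pmat_degree_le Q n \<and> pmat_coeff Q n = mat 1"
proof -
  obtain C where C: "C n = mat 1" "\<And>t. F t = (\<Sum>k\<le>n. t ^ k *\<^sub>R C k)"
    using assms unfolding monic_matpoly_def by blast
  define Q where "Q = (\<chi> i j. \<Sum>k\<le>n. monom (C k $ i $ j) k)"
  have "F = pmat_eval Q"
    by (simp add: fun_eq_iff vec_eq_iff C(2) pmat_eval_def Q_def poly_sum poly_monom sum_component mult.commute)
  moreover have "pmat_degree_le Q n"
    unfolding pmat_degree_le_def Q_def by (auto intro!: degree_sum_le order.trans[OF degree_monom_le])
  moreover have "pmat_coeff Q n = mat 1"
    by (simp add: vec_eq_iff Q_def coeff_sum coeff_monom C(1))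
  ultimately show ?thesis
    by blast
qed

lemma monic_OMP_pmat_eval:
  assumes "monic_OMP W P"
  obtains Q where "\<And>n. P n = pmat_eval (Q n)" "\<And>n. pmat_degree_le (Q n) n" "\<And>n. pmat_coeff (Q n) n = mat 1"
proof -
  have "\<forall>n. \<exists>Q. P n = pmat_eval Q \<and> pmat_degree_le Q n \<and> pmat_coeff Q n = mat 1"
    using assms monic_matpoly_pmat_eval unfolding monic_OMP_def by blast
  from choice[OF this] obtain Q
    where "\<forall>n. P n = pmat_eval (Q n) \<and> pmat_degree_le (Q n) n \<and> pmat_coeff (Q n) n = mat 1"
    by blast
  then show thesis
    by (intro that) blast+
qed

section \<open>The weight matrix and its Rodrigues formula\<close>

lemma mat2_eq_iff:
  "(A :: 'a^2^2) = B \<longleftrightarrow> A$1$1 = B$1$1 \<and> A$1$2 = B$1$2 \<and> A$2$1 = B$2$1 \<and> A$2$2 = B$2$2"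
  by (auto simp: vec_eq_iff forall_2)

lemma mk2_nth [simp]:
  "mk2 a b c d $ 1 $ 1 = a" "mk2 a b c d $ 1 $ 2 = b" "mk2 a b c d $ 2 $ 1 = c" "mk2 a b c d $ 2 $ 2 = d"
  by (simp_all add: mk2_def)

lemma mk2_mult: "mk2 a b c d ** mk2 e f g h = mk2 (a*e + b*g) (a*f + b*h) (c*e + d*g) (c*f + d*h)"
  by (simp add: mat2_eq_iff matrix_matrix_mult_def sum_2)

lemma mk2_transpose: "transpose (mk2 a b c d) = mk2 a c b d"
  by (simp add: mat2_eq_iff transpose_def)

lemma mat_1_eq_mk2: "(mat 1 :: real^2^2) = mk2 1 0 0 1"
  by (simp add: mat2_eq_iff mat_def)

definition pmat2 :: "real poly \<Rightarrow> real poly \<Rightarrow> real poly \<Rightarrow> real poly \<Rightarrow> real poly^2^2" where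
  "pmat2 a b c d = (\<chi> i j. if i = 1 then (if j = 1 then a else b) else (if j = 1 then c else d))"

lemma pmat2_nth [simp]:
  "pmat2 a b c d $ 1 $ 1 = a" "pmat2 a b c d $ 1 $ 2 = b" "pmat2 a b c d $ 2 $ 1 = c" "pmat2 a b c d $ 2 $ 2 = d"
  by (simp_all add: pmat2_def)

lemma pmat2_mult:
  "pmat2 a b c d ** pmat2 e f g h = pmat2 (a*e + b*g) (a*f + b*h) (c*e + d*g) (c*f + d*h)"
  by (simp add: mat2_eq_iff matrix_matrix_mult_def sum_2)

definition weight_diag :: "real \<Rightarrow> real \<Rightarrow> real \<Rightarrow> real poly" where
  "weight_diag a b v = [:a + 1, -(a + v + b + 2), v * (a + v + b + 2) / (a + v - b):]"

definition weight_offdiag :: "real \<Rightarrow> real \<Rightarrow> real poly" where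
  "weight_offdiag a b = [:-(a + 1), a + b + 2:]"

definition Wpoly :: "real \<Rightarrow> real \<Rightarrow> real \<Rightarrow> real poly^2^2" where
  "Wpoly a b v = pmat2 (weight_diag a b v) (weight_offdiag a b) (weight_offdiag a b) (weight_diag a b (-v))"

lemma pmat_eval_Wpoly: "pmat_eval (Wpoly a b v) t = Wtilde a b v t"
  by (simp add: mat2_eq_iff pmat_eval_def Wpoly_def weight_diag_def weight_offdiag_def Wtilde_def
      power2_eq_square algebra_simps add_divide_distrib[symmetric])

lemma transpose_Wpoly: "transpose (Wpoly a b v) = Wpoly a b v"
  by (simp add: mat2_eq_iff transpose_def Wpoly_def)

lemma ipW_Wmat_pmat_eval:
  assumes "a > -1" "b > -1"
  shows "ipW (Wmat a b v) (pmat_eval X) (pmat_eval Y) = pmat_integral a b (X ** Wpoly a b v ** transpose Y)"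
proof -
  have "pmat_eval X t ** Wmat a b v t ** transpose (pmat_eval Y t)
          = jacobi_weight a b t *\<^sub>R pmat_eval (X ** Wpoly a b v ** transpose Y) t" for t
    by (simp add: Wmat_def jacobi_weight_def pmat_eval_mult pmat_eval_transpose pmat_eval_Wpoly
        matrix_mult_scaleR_left matrix_mult_scaleR_right)
  then show ?thesis
    unfolding ipW_def by (simp add: integral_unique[OF pmat_eval_has_integral[OF assms]])
qed

lemma ipW_Wmat_const_mult:
  assumes "a > -1" "b > -1"
  shows "ipW (Wmat a b v) (\<lambda>t. A ** pmat_eval X t) (\<lambda>t. B ** pmat_eval Y t)
           = A ** ipW (Wmat a b v) (pmat_eval X) (pmat_eval Y) ** transpose B"
proof -
  have eval: "(\<lambda>t. C ** pmat_eval Z t) = pmat_eval (pmat_const C ** Z)" for C :: "real^2^2" and Z :: "real poly^2^2"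
    by (simp add: fun_eq_iff pmat_eval_mult)
  have "ipW (Wmat a b v) (\<lambda>t. A ** pmat_eval X t) (\<lambda>t. B ** pmat_eval Y t)
          = pmat_integral a b (pmat_const A ** (X ** Wpoly a b v ** transpose Y) ** pmat_const (transpose B))"
    unfolding eval ipW_Wmat_pmat_eval[OF assms]
    by (simp add: matrix_transpose_mul transpose_pmat_const matrix_mul_assoc)
  also have "\<dots> = A ** ipW (Wmat a b v) (pmat_eval X) (pmat_eval Y) ** transpose B"
    by (simp add: ipW_Wmat_pmat_eval assms pmat_integral_const_mult pmat_integral_mult_const)
  finally show ?thesis .
qed

lemma jacobi_integral_weight_diag:
  assumes a: "a > -1" and b: "b > -1" and v: "a + v - b \<noteq> 0"
  shows "jacobi_integral a b (weight_diag a b v) = v * Beta (a + 2) (b + 2) * (a + b - v + 4) / (a + v - b)"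
proof -
  have s: "a + b + 2 > 0" "a + b + 3 > 0"
    using a b by auto
  have not_nonpos: "x \<notin> \<int>\<^sub>\<le>\<^sub>0" if "x > 0" for x :: real
    using that by (auto dest: nonpos_Ints_nonpos)
  have B1: "Beta (a + 2) (b + 1) = (a + 1) / (a + b + 2) * Beta (a + 1) (b + 1)"
    using Beta_plus1_left[of "a + 1" "b + 1"] not_nonpos[of "a + 1"] a s
    by (simp add: field_simps add_ac)
  have B2: "Beta (a + 3) (b + 1) = (a + 2) / (a + b + 3) * Beta (a + 2) (b + 1)"
    using Beta_plus1_left[of "a + 2" "b + 1"] not_nonpos[of "a + 2"] a s
    by (simp add: field_simps add_ac)
  have B3: "Beta (a + 2) (b + 2) = (b + 1) / (a + b + 3) * Beta (a + 2) (b + 1)"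
    using Beta_plus1_right[of "b + 1" "a + 2"] not_nonpos[of "b + 1"] b s
    by (simp add: field_simps add_ac)
  show ?thesis
    unfolding weight_diag_def jacobi_integral_quadratic[OF a b] B3 B2 B1
    using s v by (simp add: divide_simps) (simp add: algebra_simps)
qed

lemma jacobi_integral_weight_offdiag:
  assumes a: "a > -1" and b: "b > -1"
  shows "jacobi_integral a b (weight_offdiag a b) = 0"
proof -
  have "(a + 1) + (b + 1) > 0" "a + 1 \<notin> \<int>\<^sub>\<le>\<^sub>0"
    using a b by (auto dest: nonpos_Ints_nonpos)
  then show ?thesis
    using Beta_plus1_left[of "a + 1" "b + 1"] jacobi_integral_quadratic[OF a b, of "-(a + 1)" "a + b + 2" 0]
    unfolding weight_offdiag_def by (simp add: algebra_simps)
qed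

lemma pmat_integral_Wpoly:
  assumes "a > -1" "b > -1"
  shows "pmat_integral a b (Wpoly a b v)
           = mk2 (jacobi_integral a b (weight_diag a b v)) 0 0 (jacobi_integral a b (weight_diag a b (-v)))"
  using assms by (simp add: mat2_eq_iff pmat_integral_def Wpoly_def jacobi_integral_weight_offdiag)

(* The entries of T and S are obtained by solving T W_{a,b} = \<Phi>_{a,b} W_{a+1,b+1} and
   S W_{a,b} = t (1 - t) W_{a+1,b+1} coefficientwise. *)
definition rodrigues_T_diag :: "real \<Rightarrow> real \<Rightarrow> real \<Rightarrow> real poly" where
  "rodrigues_T_diag a b v =
     [:((a - b) * (a + b + 4) - (a * a + a * b + 5 * a + 3 * b + 8) * v - (a + 2) * v * v)
         / (-v * (a + b + v + 2)),
       -(a + b + 4) * (a + b + v + 4) / (a + b + v + 2):]"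

definition rodrigues_T_offdiag :: "real \<Rightarrow> real \<Rightarrow> real \<Rightarrow> real poly" where
  "rodrigues_T_offdiag a b v = [:-(a + b + 4) * (a - v - b) / (v * (a + b + v + 2)):]"

definition rodrigues_S_diag :: "real \<Rightarrow> real \<Rightarrow> real \<Rightarrow> real poly" where
  "rodrigues_S_diag a b v =
     [:(a + v - b) * (a - v - b) / (-v * (a + b + v + 2) * (a + b - v + 2)),
       (a + b + v + 4) / (a + b + v + 2), -(a + b + v + 4) / (a + b + v + 2):]"

definition rodrigues_S_offdiag :: "real \<Rightarrow> real \<Rightarrow> real \<Rightarrow> real poly" where
  "rodrigues_S_offdiag a b v =
     [:(a + v - b) * (a - v - b) / (-v * (a + b + v + 2) * (a + b - v + 2)),
       2 * (a - v - b) / ((a + b + v + 2) * (a + b - v + 2)):]"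

definition rodrigues_T :: "real \<Rightarrow> real \<Rightarrow> real \<Rightarrow> real poly^2^2" where
  "rodrigues_T a b v = pmat2 (rodrigues_T_diag a b v) (rodrigues_T_offdiag a b v)
                             (rodrigues_T_offdiag a b (-v)) (rodrigues_T_diag a b (-v))"

definition rodrigues_S :: "real \<Rightarrow> real \<Rightarrow> real \<Rightarrow> real poly^2^2" where
  "rodrigues_S a b v = pmat2 (rodrigues_S_diag a b v) (rodrigues_S_offdiag a b v)
                             (rodrigues_S_offdiag a b (-v)) (rodrigues_S_diag a b (-v))"

lemma rodrigues_T_Wpoly:
  assumes "v \<noteq> 0" "a + b + v + 2 \<noteq> 0" "a + b - v + 2 \<noteq> 0" "a + v - b \<noteq> 0" "a - v - b \<noteq> 0"
  shows "rodrigues_T a b v ** Wpoly a b v = pmat_map (jacobi_raise a b) (Wpoly (a + 1) (b + 1) v)"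
  unfolding rodrigues_T_def Wpoly_def pmat2_mult
  using assms
  apply (simp add: mat2_eq_iff jacobi_raise_def pderiv_pCons rodrigues_T_diag_def rodrigues_T_offdiag_def
      weight_diag_def weight_offdiag_def)
  apply (simp add: divide_simps)
  apply (simp add: algebra_simps)
  done

lemma rodrigues_S_Wpoly:
  assumes "v \<noteq> 0" "a + b + v + 2 \<noteq> 0" "a + b - v + 2 \<noteq> 0" "a + v - b \<noteq> 0" "a - v - b \<noteq> 0"
  shows "rodrigues_S a b v ** Wpoly a b v = pmat_map ((*) [:0, 1, -1:]) (Wpoly (a + 1) (b + 1) v)"
  unfolding rodrigues_S_def Wpoly_def pmat2_mult
  using assms
  apply (simp add: mat2_eq_iff rodrigues_S_diag_def rodrigues_S_offdiag_def
      weight_diag_def weight_offdiag_def)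
  apply (simp add: divide_simps)
  apply (simp add: algebra_simps)
  done

fun rodrigues_R :: "real \<Rightarrow> real \<Rightarrow> real \<Rightarrow> nat \<Rightarrow> real poly^2^2" where
  "rodrigues_R a b v 0 = mat 1"
| "rodrigues_R a b v (Suc m) = rodrigues_R (a + 1) (b + 1) v m ** rodrigues_T a b v
                               + pmat_map pderiv (rodrigues_R (a + 1) (b + 1) v m) ** rodrigues_S a b v"

lemma rodrigues_R_Wpoly:
  assumes "v \<noteq> 0" "a + b + v + 2 > 0" "a + b - v + 2 > 0" "a + v - b \<noteq> 0" "a - v - b \<noteq> 0"
  shows "rodrigues_R a b v m ** Wpoly a b v = pmat_map (jacobi_raise_pow a b m) (Wpoly (a + real m) (b + real m) v)"
  using assms
proof (induction m arbitrary: a b)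
  case 0
  then show ?case
    by (simp add: vec_eq_iff)
next
  case (Suc m)
  let ?R = "rodrigues_R (a + 1) (b + 1) v m"
  have "rodrigues_R a b v (Suc m) ** Wpoly a b v
          = ?R ** (rodrigues_T a b v ** Wpoly a b v) + pmat_map pderiv ?R ** (rodrigues_S a b v ** Wpoly a b v)"
    by (simp add: matrix_add_rdistrib matrix_mul_assoc)
  also have "\<dots> = ?R ** pmat_map (jacobi_raise a b) (Wpoly (a + 1) (b + 1) v)
                  + pmat_map pderiv ?R ** pmat_map ((*) [:0, 1, -1:]) (Wpoly (a + 1) (b + 1) v)"
    using Suc.prems by (simp add: rodrigues_T_Wpoly rodrigues_S_Wpoly)
  also have "\<dots> = pmat_map (jacobi_raise a b) (?R ** Wpoly (a + 1) (b + 1) v)"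
    by (simp add: pmat_raise_mult)
  also have "?R ** Wpoly (a + 1) (b + 1) v
               = pmat_map (jacobi_raise_pow (a + 1) (b + 1) m) (Wpoly (a + 1 + real m) (b + 1 + real m) v)"
    using Suc.prems by (intro Suc.IH) auto
  finally show ?case
    by (simp add: add_ac comp_def)
qed

lemma pmat_degree_le_rodrigues_T: "pmat_degree_le (rodrigues_T a b v) 1"
  by (simp add: pmat_degree_le_def forall_2 rodrigues_T_def rodrigues_T_diag_def rodrigues_T_offdiag_def)

lemma pmat_degree_le_rodrigues_S: "pmat_degree_le (rodrigues_S a b v) 2"
  by (simp add: pmat_degree_le_def forall_2 rodrigues_S_def rodrigues_S_diag_def rodrigues_S_offdiag_def
      numeral_2_eq_2)

lemma pmat_coeff_rodrigues_T_S:
  "pmat_coeff (rodrigues_T a b v) 1 + x *\<^sub>R pmat_coeff (rodrigues_S a b v) 2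
     = mk2 (- (a + b + v + 4) / (a + b + v + 2) * (a + b + 4 + x)) 0 0
           (- (a + b - v + 4) / (a + b - v + 2) * (a + b + 4 + x))"
  by (simp add: mat2_eq_iff rodrigues_T_def rodrigues_T_diag_def rodrigues_T_offdiag_def rodrigues_S_def
      rodrigues_S_diag_def rodrigues_S_offdiag_def numeral_2_eq_2 algebra_simps add_divide_distrib[symmetric])

definition rodrigues_lead :: "real \<Rightarrow> real \<Rightarrow> real \<Rightarrow> nat \<Rightarrow> real" where
  "rodrigues_lead a b v m = (-1) ^ m * (a + b + v + 2 + 2 * real m) / (a + b + v + 2) * pochhammer (a + b + real m + 3) m"

lemma rodrigues_lead_Suc:
  assumes "a + b + v + 2 > 0"
  shows "rodrigues_lead (a + 1) (b + 1) v m * (- (a + b + v + 4) / (a + b + v + 2) * (a + b + 4 + real m))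
           = rodrigues_lead a b v (Suc m)"
proof -
  define K L P where "K = a + b + v + 2" and "L = a + b + v + 4"
    and "P = pochhammer (a + b + real m + 5) m"
  have lhs: "rodrigues_lead (a + 1) (b + 1) v m = (-1) ^ m * (L + 2 * real m) / L * P"
    unfolding rodrigues_lead_def L_def P_def by (simp add: algebra_simps)
  have rhs: "rodrigues_lead a b v (Suc m) = (-1) ^ Suc m * (L + 2 * real m) / K * ((a + b + 4 + real m) * P)"
    unfolding rodrigues_lead_def K_def L_def P_def by (simp add: pochhammer_rec algebra_simps)
  have "L > 0" "K > 0"
    using assms by (simp_all add: K_def L_def)
  then show ?thesis
    unfolding lhs rhs K_def[symmetric] L_def[symmetric] by (simp add: field_simps)
qed

lemma rodrigues_R_leading:
  assumes "a + b + v + 2 > 0" "a + b - v + 2 > 0"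
  shows "pmat_degree_le (rodrigues_R a b v m) m
         \<and> pmat_coeff (rodrigues_R a b v m) m = mk2 (rodrigues_lead a b v m) 0 0 (rodrigues_lead a b (-v) m)"
  using assms
proof (induction m arbitrary: a b)
  case 0
  then show ?case
    by (simp add: pmat_degree_le_def mat2_eq_iff mat_def rodrigues_lead_def)
next
  case (Suc m)
  let ?R = "rodrigues_R (a + 1) (b + 1) v m"
  have IH: "pmat_degree_le ?R m" "pmat_coeff ?R m = mk2 (rodrigues_lead (a + 1) (b + 1) v m) 0 0
                                                         (rodrigues_lead (a + 1) (b + 1) (-v) m)"
    using Suc.IH[of "a + 1" "b + 1"] Suc.prems by auto
  note step = pmat_rodrigues_step[OF IH(1) pmat_degree_le_rodrigues_T pmat_degree_le_rodrigues_S]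
  have "pmat_coeff (rodrigues_R a b v (Suc m)) (Suc m)
          = pmat_coeff ?R m ** (pmat_coeff (rodrigues_T a b v) 1 + real m *\<^sub>R pmat_coeff (rodrigues_S a b v) 2)"
    using step(2) by simp
  also have "\<dots> = mk2 (rodrigues_lead a b v (Suc m)) 0 0 (rodrigues_lead a b (-v) (Suc m))"
    unfolding IH(2) pmat_coeff_rodrigues_T_S mk2_mult
    using rodrigues_lead_Suc[of a b v m] rodrigues_lead_Suc[of a b "-v" m] Suc.prems by simp
  finally show ?case
    using step(1) by simp
qed

section \<open>The norms\<close>

lemma pmat_integral_monic_Wpoly_lead:
  fixes Q :: "nat \<Rightarrow> real poly^2^2"
  assumes a: "a > -1" and b: "b > -1"
    and v: "v \<noteq> 0" "a + b + v + 2 > 0" "a + b - v + 2 > 0" "a + v - b \<noteq> 0" "a - v - b \<noteq> 0"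
    and Q: "\<And>k. pmat_degree_le (Q k) k" "\<And>k. pmat_coeff (Q k) k = mat 1"
    and orth: "\<And>k. k < n \<Longrightarrow> pmat_integral a b (Q n ** Wpoly a b v ** transpose (Q k)) = 0"
  shows "pmat_integral a b (Q n ** Wpoly a b v ** transpose (Q n))
           ** mk2 (rodrigues_lead a b v n) 0 0 (rodrigues_lead a b (-v) n)
         = ((-1) ^ n * fact n) *\<^sub>R mk2 (jacobi_integral (a + real n) (b + real n) (weight_diag (a + real n) (b + real n) v)) 0 0
                                     (jacobi_integral (a + real n) (b + real n) (weight_diag (a + real n) (b + real n) (-v)))"
proof -
  define R where "R = rodrigues_R a b v n"
  have R: "pmat_degree_le R n" "pmat_coeff R n = mk2 (rodrigues_lead a b v n) 0 0 (rodrigues_lead a b (-v) n)"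
    using rodrigues_R_leading[of a b v n] v by (simp_all add: R_def)
  have "pmat_integral a b (Q n ** Wpoly a b v ** transpose R)
          = pmat_integral a b (Q n ** Wpoly a b v ** transpose (Q n)) ** transpose (pmat_coeff R n)"
    using pmat_integral_degree_le_leading[OF a b pmat_integral_orth_degree_less[OF a b Q orth] Q R(1)] .
  also have "transpose (pmat_coeff R n) = mk2 (rodrigues_lead a b v n) 0 0 (rodrigues_lead a b (-v) n)"
    by (simp add: R(2) mk2_transpose)
  finally have "pmat_integral a b (Q n ** Wpoly a b v ** transpose (Q n))
                  ** mk2 (rodrigues_lead a b v n) 0 0 (rodrigues_lead a b (-v) n)
                = pmat_integral a b (Q n ** transpose (R ** Wpoly a b v))"
    by (simp add: matrix_transpose_mul transpose_Wpoly matrix_mul_assoc)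
  also have "\<dots> = ((-1) ^ n * fact n) *\<^sub>R pmat_integral (a + real n) (b + real n) (Wpoly (a + real n) (b + real n) v)"
    unfolding R_def rodrigues_R_Wpoly[OF v]
    by (simp add: pmat_integral_monic_raise_pow[OF a b Q] transpose_Wpoly)
  finally show ?thesis
    using a b by (simp add: pmat_integral_Wpoly)
qed

lemma mk2_mult_diag_eq_imp:
  assumes "A ** mk2 l1 0 0 l2 = c *\<^sub>R mk2 m1 0 0 m2" "l1 \<noteq> 0" "l2 \<noteq> 0"
  shows "A = mk2 (c * m1 / l1) 0 0 (c * m2 / l2)"
  using assms by (auto simp: mat2_eq_iff matrix_matrix_mult_def sum_2 field_simps)

lemma dg1_eq_integral_div_lead:
  assumes "a > -1" "b > -1" "a + v - b \<noteq> 0" "a + b + v + 2 > 0"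
  shows "dg1 a b v n = (-1) ^ n * fact n * jacobi_integral (a + real n) (b + real n) (weight_diag (a + real n) (b + real n) v)
                        / rodrigues_lead a b v n"
proof -
  define B where "B = Beta (a + real n + 2) (b + real n + 2)"
  define Q where "Q = pochhammer (a + b + real n + 3) n"
  define s :: real where "s = (-1) ^ n"
  define p K L X where "p = a + v - b" and "K = a + b + v + 2" and "L = a + b + v + 2 + 2 * real n"
    and "X = a + b - v + 2 * real n + 4"
  have dg1: "dg1 a b v n = fact n * v * B / Q * (K * X / (p * L))"
    unfolding dg1_def cfac_def B_def Q_def p_def K_def L_def X_def by (simp add: algebra_simps)
  have lead: "rodrigues_lead a b v n = s * L / K * Q"
    unfolding rodrigues_lead_def K_def L_def Q_def s_def ..
  have J: "jacobi_integral (a + real n) (b + real n) (weight_diag (a + real n) (b + real n) v) = v * B * X / p"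
    using assms by (subst jacobi_integral_weight_diag) (simp_all add: B_def X_def p_def algebra_simps)
  have "Q > 0" "K > 0" "L > 0" "s \<noteq> 0" "p \<noteq> 0"
    using assms by (auto simp: Q_def K_def L_def s_def p_def intro!: pochhammer_pos)
  then show ?thesis
    unfolding dg1 lead J s_def[symmetric] by (simp add: field_simps)
qed

lemma dg2_eq_dg1_uminus: "dg2 a b v n = dg1 a b (-v) n"
  by (simp add: dg1_def dg2_def cfac_def)

lemma pmat_integral_monic_Wpoly_norm:
  fixes Q :: "nat \<Rightarrow> real poly^2^2"
  assumes a: "a > -1" and b: "b > -1" and v: "\<bar>a - b\<bar> < \<bar>v\<bar>" "\<bar>v\<bar> < a + b + 2"
    and Q: "\<And>k. pmat_degree_le (Q k) k" "\<And>k. pmat_coeff (Q k) k = mat 1"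
    and orth: "\<And>k. k < n \<Longrightarrow> pmat_integral a b (Q n ** Wpoly a b v ** transpose (Q k)) = 0"
  shows "pmat_integral a b (Q n ** Wpoly a b v ** transpose (Q n)) = mk2 (dg1 a b v n) 0 0 (dg2 a b v n)"
proof -
  have nz: "v \<noteq> 0" "a + b + v + 2 > 0" "a + b - v + 2 > 0" "a + v - b \<noteq> 0" "a - v - b \<noteq> 0"
    using v by auto
  have "rodrigues_lead a b u n \<noteq> 0" if "a + b + u + 2 > 0" for u
    using that a b by (auto simp: rodrigues_lead_def intro!: pochhammer_pos[THEN less_imp_neq, symmetric])
  then show ?thesis
    using mk2_mult_diag_eq_imp[OF pmat_integral_monic_Wpoly_lead[OF a b nz Q orth]] nz a b
    by (simp add: dg2_eq_dg1_uminus dg1_eq_integral_div_lead)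
qed

lemma dg1_pos:
  assumes a: "a > -1" and b: "b > -1" and v: "\<bar>a - b\<bar> < \<bar>v\<bar>" "\<bar>v\<bar> < a + b + 2"
  shows "dg1 a b v n > 0"
proof -
  define B where "B = Beta (a + real n + 2) (b + real n + 2)"
  define Q where "Q = pochhammer (a + b + real n + 3) n"
  have eq: "dg1 a b v n = fact n * B * (a + v + b + 2) * (a - v + b + 2 * real n + 4)
                        / (Q * (a + v + b + 2 * real n + 2)) * (v / (a + v - b))"
    unfolding dg1_def cfac_def B_def Q_def by (simp add: mult_ac)
  have "B > 0" "Q > 0"
    using a b by (simp_all add: B_def Beta_def Q_def pochhammer_pos)
  moreover have "a + v + b + 2 > 0" "a - v + b + 2 * real n + 4 > 0" "a + v + b + 2 * real n + 2 > 0"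
    using v by auto
  ultimately have "fact n * B * (a + v + b + 2) * (a - v + b + 2 * real n + 4)
                     / (Q * (a + v + b + 2 * real n + 2)) > 0"
    by (intro divide_pos_pos mult_pos_pos) auto
  moreover have "v / (a + v - b) > 0"
    using v by (auto simp: zero_less_divide_iff abs_if split: if_splits)
  ultimately show ?thesis
    unfolding eq by (rule mult_pos_pos)
qed

lemma normalize_diag_mult:
  assumes "d1 > 0" "d2 > 0"
  defines "N \<equiv> matrix_inv (mk2 (sqrt d1) 0 0 (sqrt d2))"
  shows "N ** mk2 d1 0 0 d2 ** transpose N = mat 1"
proof -
  have "N = mk2 (1 / sqrt d1) 0 0 (1 / sqrt d2)"
    unfolding N_def using assms by (intro matrix_inv_unique) (simp_all add: mk2_mult mat_1_eq_mk2)
  then show ?thesis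
    using assms by (simp add: mk2_mult mk2_transpose mat_1_eq_mk2 divide_divide_eq_left[symmetric])
qed

lemma ipW_Wmat_normalized:
  assumes ab: "a > -1" "b > -1" and P: "\<And>n. P n = pmat_eval (Q n)"
    and norm: "\<And>n. ipW (Wmat a b v) (P n) (P n) = mk2 (d1 n) 0 0 (d2 n)"
    and pos: "\<And>n. d1 n > 0 \<and> d2 n > 0"
    and orth: "\<forall>n m. n \<noteq> m \<longrightarrow> ipW (Wmat a b v) (P n) (P m) = 0"
  shows "ipW (Wmat a b v) (\<lambda>t. matrix_inv (mk2 (sqrt (d1 n)) 0 0 (sqrt (d2 n))) ** P n t)
                          (\<lambda>t. matrix_inv (mk2 (sqrt (d1 m)) 0 0 (sqrt (d2 m))) ** P m t)
           = (if n = m then mat 1 else 0)"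
  using ipW_Wmat_const_mult[OF ab] norm orth normalize_diag_mult pos
  by (cases "n = m") (simp_all add: P vec_eq_iff matrix_matrix_mult_def)

theorem proposition4p1:
  fixes \<alpha> \<beta> v :: real and P :: "nat \<Rightarrow> real \<Rightarrow> real^2^2"
  assumes "\<alpha> > -1" and "\<beta> > -1"
    and "\<bar>\<alpha> - \<beta>\<bar> < \<bar>v\<bar>" and "\<bar>v\<bar> < \<alpha> + \<beta> + 2"
    and "monic_OMP (Wmat \<alpha> \<beta> v) P"
  shows "(\<forall>n. ipW (Wmat \<alpha> \<beta> v) (P n) (P n) = mk2 (dg1 \<alpha> \<beta> v n) 0 0 (dg2 \<alpha> \<beta> v n))
    \<and> (\<forall>n. dg1 \<alpha> \<beta> v n > 0 \<and> dg2 \<alpha> \<beta> v n > 0)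
    \<and> (\<forall>n m. ipW (Wmat \<alpha> \<beta> v)
                 (\<lambda>t. matrix_inv (mk2 (sqrt (dg1 \<alpha> \<beta> v n)) 0 0 (sqrt (dg2 \<alpha> \<beta> v n))) ** P n t)
                 (\<lambda>t. matrix_inv (mk2 (sqrt (dg1 \<alpha> \<beta> v m)) 0 0 (sqrt (dg2 \<alpha> \<beta> v m))) ** P m t)
               = (if n = m then mat 1 else 0))"
proof -
  note ab = assms(1,2) and v = assms(3,4)
  obtain Q where P: "\<And>n. P n = pmat_eval (Q n)"
    and Q: "\<And>n. pmat_degree_le (Q n) n" "\<And>n. pmat_coeff (Q n) n = mat 1"
    using monic_OMP_pmat_eval[OF assms(5)] by blast
  have orth: "\<forall>n m. n \<noteq> m \<longrightarrow> ipW (Wmat \<alpha> \<beta> v) (P n) (P m) = 0"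
    using assms(5) unfolding monic_OMP_def by blast
  have norm: "ipW (Wmat \<alpha> \<beta> v) (P n) (P n) = mk2 (dg1 \<alpha> \<beta> v n) 0 0 (dg2 \<alpha> \<beta> v n)" for n
    using pmat_integral_monic_Wpoly_norm[OF ab v Q] orth by (simp add: P ipW_Wmat_pmat_eval[OF ab])
  have pos: "dg1 \<alpha> \<beta> v n > 0 \<and> dg2 \<alpha> \<beta> v n > 0" for n
    using dg1_pos[OF ab] v by (simp add: dg2_eq_dg1_uminus)
  show ?thesis
    using norm pos ipW_Wmat_normalized[OF ab P norm pos orth] by blast
qed

end
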